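(* Let $k\ge 1$ be an integer, let $\lambda_1,\lambda_2,\dots,\lambda_k$ be pairwise distinct complex numbers with $|\lambda_\ell|<1$ for all $\ell$, and let $s_1,s_2,\dots,s_k$ be integers. Put $S=|s_1+s_2+\cdots+s_k|$. Then the limit $$A=\lim_{n\to\infty}\frac{1}{n}\sum_{i_1,i_2,\dots,i_k=1}^{n}\lambda_1^{|i_1-i_2-s_1|}\,\lambda_2^{|i_2-i_3-s_2|}\cdots\lambda_{k-1}^{|i_{k-1}-i_k-s_{k-1}|}\,\lambda_k^{|i_k-i_1-s_k|}$$ exists, and $$A=\sum_{j=1}^{k}\lambda_j^{S+k-1}\prod_{\substack{\ell=1\\ \ell\neq j}}^{k}\frac{1-\lambda_\ell^{2}}{(\lambda_j-\lambda_\ell)(1-\lambda_j\lambda_\ell)}.$$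
   Context: The sum runs over all $k$-tuples $(i_1,\dots,i_k)$ of integers with $1\le i_p\le n$ for each $p$. The convention $\lambda^0=1$ is used for all $\lambda$ (including $\lambda=0$), and an empty product equals $1$. In the intended application the $\lambda_\ell$ are roots of the characteristic polynomial $\lambda^k=\alpha_1\lambda^{k-1}+\cdots+\alpha_k$ of a stationary autoregressive model, but the statement is purely about the numbers $\lambda_\ell$. *)

theory Defs
  imports "HOL-Analysis.Analysis"
begin

end

theory Submission
  imports Defs
begin

text \<open>Put h_l(t) = \<lambda>_l^|t - s_l|. The summand is the weight of the closed walk
  i_1 \<rightarrow> ... \<rightarrow> i_k \<rightarrow> i_1, so the sum is the trace of the product of the n \<times> n Toeplitz matrices
  (h_l(x - y)) with 1 \<le> x, y \<le> n. On all of \<int>, two-sided geometric sequences convolve into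
  combinations of themselves,
    \<Sum>_z a^|u - z| b^|z - v| = \<alpha>(a,b) a^|u - v| + \<alpha>(b,a) b^|u - v|,
    \<alpha>(a,b) = a (1 - b^2) / ((a - b) (1 - a b)),
  and a three-term identity for \<alpha> shows by induction that
    (h_0 * ... * h_{k-1})(m) = \<Sum>_j (\<Prod>_{l \<noteq> j} \<alpha>(\<lambda>_j, \<lambda>_l)) \<lambda>_j^|m - \<Sum> s|.
  Truncating every convolution to {1..n} changes the diagonal entry at x only by
  O(\<rho>^x + \<rho>^(n+1-x)), where \<rho> < 1 bounds all |\<lambda>_l|, so the normalised trace tends to the full
  convolution at 0, which is the stated sum.\<close>

section \<open>Two-sided geometric sequences\<close>

lemma has_sum_geometric:
  fixes q :: "'a::{real_normed_field,banach}"
  assumes "norm q < 1"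
  shows "((\<lambda>n. q ^ n) has_sum (1 / (1 - q))) UNIV"
proof (rule norm_summable_imp_has_sum)
  show "summable (\<lambda>n. norm (q ^ n))"
    unfolding norm_power using assms by (intro summable_geometric) simp
  show "(\<lambda>n. q ^ n) sums (1 / (1 - q))"
    using geometric_sums[of q] assms by simp
qed

lemma has_sum_sum:
  fixes f :: "'i \<Rightarrow> 'a \<Rightarrow> 'b::topological_comm_monoid_add"
  assumes "finite J" "\<And>j. j \<in> J \<Longrightarrow> (f j has_sum s j) A"
  shows "((\<lambda>x. \<Sum>j\<in>J. f j x) has_sum (\<Sum>j\<in>J. s j)) A"
  using assms by (induction J rule: finite_induct) (auto intro: has_sum_add)

lemma has_sum_int_atLeast_iff:
  "((\<lambda>w::nat. f (d + int w)) has_sum S) UNIV \<longleftrightarrow> (f has_sum S) {d..}"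
  by (rule has_sum_reindex_bij_witness[where j = "\<lambda>w. d + int w" and i = "\<lambda>z. nat (z - d)"]) auto

lemma has_sum_int_atMost_iff:
  "((\<lambda>w::nat. f (d - int w)) has_sum S) UNIV \<longleftrightarrow> (f has_sum S) {..d}"
  by (rule has_sum_reindex_bij_witness[where j = "\<lambda>w. d - int w" and i = "\<lambda>z. nat (d - z)"]) auto

lemma sum_power_inj_le:
  fixes \<rho> :: real
  assumes "0 \<le> \<rho>" "\<rho> < 1" "finite F" "inj_on f F"
  shows "(\<Sum>x\<in>F. \<rho> ^ f x) \<le> 1 / (1 - \<rho>)"
proof -
  have "(\<Sum>x\<in>F. \<rho> ^ f x) = (\<Sum>w\<in>f ` F. \<rho> ^ w)"
    using assms by (simp add: sum.reindex)
  also have "\<dots> \<le> 1 / (1 - \<rho>)"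
    by (rule finite_sum_le_has_sum[OF has_sum_geometric]) (use assms in auto)
  finally show ?thesis .
qed

definition abs_power :: "'a::monoid_mult \<Rightarrow> int \<Rightarrow> 'a" where
  "abs_power a t = a ^ nat \<bar>t\<bar>"

lemma abs_power_abs [simp]: "abs_power a \<bar>t\<bar> = abs_power a t"
  by (simp add: abs_power_def)

lemma abs_power_minus_commute: "abs_power a (x - y) = abs_power a (y - x)"
  by (simp add: abs_power_def abs_minus_commute)

lemma norm_abs_power_le:
  fixes a :: "'a::real_normed_div_algebra"
  assumes "norm a \<le> \<rho>"
  shows "norm (abs_power a t) \<le> abs_power \<rho> t"
  unfolding abs_power_def norm_power using assms by (intro power_mono) auto

lemma has_sum_abs_power_atLeast:
  fixes q :: "'a::{real_normed_field,banach}"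
  assumes "norm q < 1" "c \<le> d"
  shows "((\<lambda>z. abs_power q (z - c)) has_sum (abs_power q (d - c) / (1 - q))) {d..}"
proof -
  have "((\<lambda>w. abs_power q (d - c) * q ^ w) has_sum (abs_power q (d - c) * (1 / (1 - q)))) UNIV"
    by (intro has_sum_cmult_right has_sum_geometric assms)
  moreover have "abs_power q (d + int w - c) = abs_power q (d - c) * q ^ w" for w
  proof -
    have "nat \<bar>d + int w - c\<bar> = nat \<bar>d - c\<bar> + w" using assms(2) by simp
    then show ?thesis by (simp add: abs_power_def power_add)
  qed
  ultimately show ?thesis by (simp flip: has_sum_int_atLeast_iff)
qed

lemma has_sum_abs_power_atMost:
  fixes q :: "'a::{real_normed_field,banach}"
  assumes "norm q < 1" "d \<le> c"
  shows "((\<lambda>z. abs_power q (z - c)) has_sum (abs_power q (d - c) / (1 - q))) {..d}"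
proof -
  have "((\<lambda>w. abs_power q (d - c) * q ^ w) has_sum (abs_power q (d - c) * (1 / (1 - q)))) UNIV"
    by (intro has_sum_cmult_right has_sum_geometric assms)
  moreover have "abs_power q (d - int w - c) = abs_power q (d - c) * q ^ w" for w
  proof -
    have "nat \<bar>d - int w - c\<bar> = nat \<bar>d - c\<bar> + w" using assms(2) by simp
    then show ?thesis by (simp add: abs_power_def power_add)
  qed
  ultimately show ?thesis by (simp flip: has_sum_int_atMost_iff)
qed

lemma has_sum_abs_power_outside:
  fixes q :: "'a::{real_normed_field,banach}"
  assumes "norm q < 1" "x \<in> {1..n}"
  shows "((\<lambda>z. abs_power q (z - int x)) has_sum ((q ^ x + q ^ (n + 1 - x)) / (1 - q)))
           (- {1..int n})"
proof -
  have "((\<lambda>z. abs_power q (z - int x)) has_sum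
          (abs_power q (0 - int x) / (1 - q) + abs_power q (int n + 1 - int x) / (1 - q)))
        ({..0} \<union> {int n + 1..})"
    by (intro has_sum_Un_disjoint has_sum_abs_power_atMost has_sum_abs_power_atLeast)
      (use assms in auto)
  moreover have "{..0} \<union> {int n + 1..} = - {1..int n}" by auto
  moreover have "abs_power q (0 - int x) = q ^ x"
    by (simp add: abs_power_def)
  moreover have "abs_power q (int n + 1 - int x) = q ^ (n + 1 - x)"
  proof -
    have "nat \<bar>int n + 1 - int x\<bar> = n + 1 - x" using assms(2) by auto
    then show ?thesis by (simp only: abs_power_def)
  qed
  ultimately show ?thesis by (simp add: add_divide_distrib)
qed

lemma sum_abs_power_le:
  fixes \<rho> :: real
  assumes "0 \<le> \<rho>" "\<rho> < 1" "finite F"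
  shows "(\<Sum>z\<in>F. abs_power \<rho> (z - c)) \<le> 2 / (1 - \<rho>)"
proof -
  have "((\<lambda>z. abs_power \<rho> (z - c)) has_sum
          (abs_power \<rho> (c - c) / (1 - \<rho>) + abs_power \<rho> (c + 1 - c) / (1 - \<rho>)))
        ({..c} \<union> {c + 1..})"
    by (intro has_sum_Un_disjoint has_sum_abs_power_atMost has_sum_abs_power_atLeast)
      (use assms in auto)
  moreover have "{..c} \<union> {c + 1..} = UNIV" by auto
  ultimately have "((\<lambda>z. abs_power \<rho> (z - c)) has_sum ((1 + \<rho>) / (1 - \<rho>))) UNIV"
    by (simp add: abs_power_def add_divide_distrib)
  then have "(\<Sum>z\<in>F. abs_power \<rho> (z - c)) \<le> (1 + \<rho>) / (1 - \<rho>)"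
    by (rule finite_sum_le_has_sum) (use assms in \<open>auto simp: abs_power_def\<close>)
  also have "\<dots> \<le> 2 / (1 - \<rho>)"
    using assms by (intro divide_right_mono) auto
  finally show ?thesis .
qed

section \<open>Convolution of two two-sided geometric sequences\<close>

definition conv_coeff :: "'a::field \<Rightarrow> 'a \<Rightarrow> 'a" where
  "conv_coeff a b = a * (1 - b^2) / ((a - b) * (1 - a * b))"

lemma norm_lt_one_mult_neq_one:
  fixes a b :: "'a::real_normed_div_algebra"
  assumes "norm a < 1" "norm b < 1"
  shows "a * b \<noteq> 1"
proof
  assume "a * b = 1"
  then have "norm a * norm b = 1" by (metis norm_mult norm_one)
  moreover have "norm a * norm b < 1"
    using assms mult_strict_mono'[of "norm a" 1 "norm b" 1] by simp
  ultimately show False by simp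
qed

lemma conv_coeff_from_pieces:
  fixes a b :: "'a::field"
  assumes "a \<noteq> b" "a * b \<noteq> 1"
  shows "a * b * B / (1 - a * b) + (a * A - b * B) / (a - b) + a * b * A / (1 - a * b)
       = conv_coeff a b * A + conv_coeff b a * B"
proof -
  define c e where "c = 1 - a * b" and "e = a - b"
  have ce: "c \<noteq> 0" "e \<noteq> 0" "1 - b * a = c" "b - a = - e"
    using assms by (auto simp: c_def e_def mult.commute)
  have "a * b * B / c + (a * A - b * B) / e + a * b * A / c
      = a * (1 - b^2) / (e * c) * A + b * (1 - a^2) / (- e * c) * B"
    using ce(1,2) by (simp add: field_simps) (simp add: c_def e_def algebra_simps power2_eq_square)
  then show ?thesis by (simp add: conv_coeff_def ce(3,4) flip: c_def e_def)
qed

lemma has_sum_abs_power_conv_nonneg: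
  fixes a b :: "'a::{real_normed_field,banach}"
  assumes "a \<noteq> b" "norm a < 1" "norm b < 1" "0 \<le> m"
  shows "((\<lambda>z. abs_power a z * abs_power b (m - z)) has_sum
           (conv_coeff a b * abs_power a m + conv_coeff b a * abs_power b m)) UNIV"
proof -
  obtain M where m: "m = int M" using assms(4) nonneg_int_cases by blast
  have ab: "norm (a * b) < 1" "a * b \<noteq> 1"
    using mult_strict_mono'[of "norm a" 1 "norm b" 1] norm_lt_one_mult_neq_one[of a b] assms
    by (auto simp: norm_mult)
  define f where "f = (\<lambda>z. abs_power a z * abs_power b (m - z))"
  have left: "(f has_sum (a * b * b ^ M / (1 - a * b))) {..-1}"
  proof -
    have "f (-1 - int w) = a * b * b ^ M * (a * b) ^ w" for w
    proof -
      have "nat \<bar>-1 - int w\<bar> = Suc w" "nat \<bar>m - (-1 - int w)\<bar> = M + Suc w" using m by auto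
      then show ?thesis by (simp add: f_def abs_power_def power_add power_mult_distrib)
    qed
    moreover have "((\<lambda>w. a * b * b ^ M * (a * b) ^ w) has_sum (a * b * b ^ M * (1 / (1 - a * b)))) UNIV"
      by (intro has_sum_cmult_right has_sum_geometric ab)
    ultimately show ?thesis by (simp flip: has_sum_int_atMost_iff)
  qed
  have right: "(f has_sum (a * b * a ^ M / (1 - a * b))) {m + 1..}"
  proof -
    have "f (m + 1 + int w) = a * b * a ^ M * (a * b) ^ w" for w
    proof -
      have "nat \<bar>m + 1 + int w\<bar> = M + Suc w" "nat \<bar>m - (m + 1 + int w)\<bar> = Suc w" using m by auto
      then show ?thesis by (simp add: f_def abs_power_def power_add power_mult_distrib)
    qed
    moreover have "((\<lambda>w. a * b * a ^ M * (a * b) ^ w) has_sum (a * b * a ^ M * (1 / (1 - a * b)))) UNIV"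
      by (intro has_sum_cmult_right has_sum_geometric ab)
    ultimately show ?thesis by (simp flip: has_sum_int_atLeast_iff)
  qed
  have middle: "(f has_sum ((a * a ^ M - b * b ^ M) / (a - b))) {0..m}"
  proof -
    have "{0..m} = int ` {..M}" by (simp add: m atLeast0AtMost[symmetric] image_int_atLeastAtMost)
    then have "sum f {0..m} = (\<Sum>p\<le>M. a ^ p * b ^ (M - p))"
      by (simp add: sum.reindex f_def abs_power_def m nat_diff_distrib)
    also have "\<dots> = (a * a ^ M - b * b ^ M) / (a - b)"
      using diff_power_eq_sum[of a M b] assms(1) by (simp add: lessThan_Suc_atMost)
    finally show ?thesis using has_sum_finite[of "{0..m}" f] by simp
  qed
  have "(f has_sum (a * b * b ^ M / (1 - a * b) + (a * a ^ M - b * b ^ M) / (a - b)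
                    + a * b * a ^ M / (1 - a * b))) ({..-1} \<union> {0..m} \<union> {m + 1..})"
    by (intro has_sum_Un_disjoint left middle right) (use assms(4) in auto)
  moreover have "{..-1} \<union> {0..m} \<union> {m + 1..} = UNIV" by auto
  ultimately show ?thesis
    using conv_coeff_from_pieces[of a b "b ^ M" "a ^ M"] assms(1) ab
    by (simp add: f_def abs_power_def m)
qed

lemma has_sum_abs_power_conv:
  fixes a b :: "'a::{real_normed_field,banach}"
  assumes "a \<noteq> b" "norm a < 1" "norm b < 1"
  shows "((\<lambda>z. abs_power a (u - z) * abs_power b (z - v)) has_sum
           (conv_coeff a b * abs_power a (u - v) + conv_coeff b a * abs_power b (u - v))) UNIV"
proof -
  define m where "m = u - v"
  define j where "j z = (if 0 \<le> m then u - z else z - u)" for z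
  have "((\<lambda>z. abs_power a z * abs_power b (\<bar>m\<bar> - z)) has_sum
           (conv_coeff a b * abs_power a \<bar>m\<bar> + conv_coeff b a * abs_power b \<bar>m\<bar>)) UNIV"
    by (rule has_sum_abs_power_conv_nonneg) (use assms in auto)
  moreover have "abs_power a (j z) * abs_power b (\<bar>m\<bar> - j z) = abs_power a (u - z) * abs_power b (z - v)"
    for z
    by (auto simp: j_def m_def abs_power_def abs_minus_commute)
  ultimately show ?thesis
    by (subst has_sum_reindex_bij_witness[where j = j and i = "\<lambda>w. if 0 \<le> m then u - w else w + u"])
      (auto simp: j_def m_def)
qed

section \<open>Coefficients of the iterated convolution\<close>

lemma conv_coeff_three_point:
  fixes a b d :: "'a::field"
  assumes "a \<noteq> d" "a \<noteq> b" "b \<noteq> d" "a * d \<noteq> 1" "a * b \<noteq> 1" "b * d \<noteq> 1"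
  shows "conv_coeff a d * conv_coeff b a + conv_coeff d a * conv_coeff b d
       = conv_coeff b a * conv_coeff b d"
proof -
  define p1 p2 p3 q1 q2 q3 A D where "p1 = a - d" and "p2 = b - a" and "p3 = b - d"
    and "q1 = 1 - a*d" and "q2 = 1 - b*a" and "q3 = 1 - b*d" and "A = 1 - a^2" and "D = 1 - d^2"
  have nz: "p1 \<noteq> 0" "p2 \<noteq> 0" "p3 \<noteq> 0" "q1 \<noteq> 0" "q2 \<noteq> 0" "q3 \<noteq> 0"
    using assms by (auto simp: p1_def p2_def p3_def q1_def q2_def q3_def mult.commute)
  have key: "a * (p3 * q3) = b * (p1 * q1) + d * (p2 * q2)"
    by (simp add: p1_def p2_def p3_def q1_def q2_def q3_def algebra_simps)
  have "a * D / (p1 * q1) * (b * A / (p2 * q2)) + d * A / (- p1 * q1) * (b * D / (p3 * q3))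
      = b * A * D / (p1 * q1) * (a / (p2 * q2) - d / (p3 * q3))"
    using nz by (simp add: field_simps)
  also have "a / (p2 * q2) - d / (p3 * q3) = b * p1 * q1 / (p2 * q2 * p3 * q3)"
    using nz by (simp add: field_simps key)
  also have "b * A * D / (p1 * q1) * (b * p1 * q1 / (p2 * q2 * p3 * q3))
      = b * A / (p2 * q2) * (b * D / (p3 * q3))"
    using nz by (simp add: field_simps)
  finally have "a * D / (p1 * q1) * (b * A / (p2 * q2)) + d * A / (- p1 * q1) * (b * D / (p3 * q3))
      = b * A / (p2 * q2) * (b * D / (p3 * q3))" .
  moreover have "d - a = - p1" "1 - d * a = q1"
    by (simp_all add: p1_def q1_def mult.commute)
  ultimately show ?thesis
    by (simp add: conv_coeff_def flip: p1_def p2_def p3_def q1_def q2_def q3_def A_def D_def)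
qed

definition conv_weight :: "(nat \<Rightarrow> 'a::field) \<Rightarrow> nat \<Rightarrow> nat \<Rightarrow> 'a" where
  "conv_weight lam r j = (\<Prod>l\<in>{..<r} - {j}. conv_coeff (lam j) (lam l))"

lemma conv_weight_Suc:
  assumes "j < r"
  shows "conv_weight lam (Suc r) j = conv_weight lam r j * conv_coeff (lam j) (lam r)"
proof -
  have "{..<Suc r} - {j} = insert r ({..<r} - {j})" using assms by auto
  then show ?thesis by (simp add: conv_weight_def mult.commute)
qed

lemma conv_weight_Suc_self: "conv_weight lam (Suc r) r = (\<Prod>l<r. conv_coeff (lam r) (lam l))"
proof -
  have "{..<Suc r} - {r} = {..<r}" by auto
  then show ?thesis by (simp add: conv_weight_def)
qed

lemma sum_conv_weight_conv_coeff:
  fixes lam :: "nat \<Rightarrow> 'a::field"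
  assumes "1 \<le> r" "inj_on lam {..<r}" "b \<notin> lam ` {..<r}"
    and "\<And>i l. i < r \<Longrightarrow> l < r \<Longrightarrow> i \<noteq> l \<Longrightarrow> lam i * lam l \<noteq> 1"
    and "\<And>l. l < r \<Longrightarrow> b * lam l \<noteq> 1"
  shows "(\<Sum>i<r. conv_weight lam r i * conv_coeff b (lam i)) = (\<Prod>l<r. conv_coeff b (lam l))"
  using assms
proof (induction r arbitrary: b rule: nat_induct_at_least)
  case base
  then show ?case by (simp add: conv_weight_def lessThan_Suc)
next
  case (Suc r)
  let ?d = "lam r"
  have inj: "inj_on lam {..<r}" and d: "?d \<notin> lam ` {..<r}"
    using Suc.prems(1) by (auto simp: lessThan_Suc)
  have weight_d: "(\<Sum>i<r. conv_weight lam r i * conv_coeff ?d (lam i)) = conv_weight lam (Suc r) r"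
    unfolding conv_weight_Suc_self by (rule Suc.IH[OF inj d]) (use Suc.prems(3) in auto)
  have weight_b: "(\<Sum>i<r. conv_weight lam r i * conv_coeff b (lam i)) = (\<Prod>l<r. conv_coeff b (lam l))"
    by (rule Suc.IH[OF inj]) (use Suc.prems(2-) in auto)
  have three: "conv_coeff (lam i) ?d * conv_coeff b (lam i) + conv_coeff ?d (lam i) * conv_coeff b ?d
      = conv_coeff b (lam i) * conv_coeff b ?d" if "i < r" for i
  proof (rule conv_coeff_three_point)
    show "lam i \<noteq> ?d" using d that by (metis image_eqI lessThan_iff)
    show "lam i \<noteq> b" "b \<noteq> ?d" using Suc.prems(2) that by auto
    show "lam i * ?d \<noteq> 1" "lam i * b \<noteq> 1" "b * ?d \<noteq> 1"
      using Suc.prems(3)[of i r] Suc.prems(4)[of i] Suc.prems(4)[of r] that by (auto simp: mult.commute)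
  qed
  have "(\<Sum>i<Suc r. conv_weight lam (Suc r) i * conv_coeff b (lam i))
      = (\<Sum>i<r. conv_weight lam r i * conv_coeff (lam i) ?d * conv_coeff b (lam i))
        + conv_weight lam (Suc r) r * conv_coeff b ?d"
    by (simp add: conv_weight_Suc)
  also have "\<dots> = (\<Sum>i<r. conv_weight lam r i *
      (conv_coeff (lam i) ?d * conv_coeff b (lam i) + conv_coeff ?d (lam i) * conv_coeff b ?d))"
    by (simp flip: weight_d add: sum_distrib_left sum_distrib_right sum.distrib algebra_simps)
  also have "\<dots> = (\<Sum>i<r. conv_weight lam r i * conv_coeff b (lam i)) * conv_coeff b ?d"
    by (simp add: three sum_distrib_right mult.assoc)
  also have "\<dots> = (\<Prod>l<Suc r. conv_coeff b (lam l))"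
    by (simp add: weight_b)
  finally show ?case .
qed

definition shifted_kernel :: "(nat \<Rightarrow> 'a::monoid_mult) \<Rightarrow> (nat \<Rightarrow> int) \<Rightarrow> nat \<Rightarrow> int \<Rightarrow> 'a" where
  "shifted_kernel lam s l t = abs_power (lam l) (t - s l)"

text \<open>For r \<ge> 1 this is the closed form of the convolution of the first r shifted kernels on \<int>
  (see \<open>has_sum_iter_conv_Suc\<close>); for r = 0 it is the empty sum.\<close>
definition iter_conv :: "(nat \<Rightarrow> 'a::field) \<Rightarrow> (nat \<Rightarrow> int) \<Rightarrow> nat \<Rightarrow> int \<Rightarrow> 'a" where
  "iter_conv lam s r m = (\<Sum>j<r. conv_weight lam r j * abs_power (lam j) (m - (\<Sum>l<r. s l)))"

lemma iter_conv_one: "iter_conv lam s 1 m = shifted_kernel lam s 0 m"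
  by (simp add: iter_conv_def conv_weight_def shifted_kernel_def lessThan_Suc)

lemma has_sum_iter_conv_Suc:
  fixes lam :: "nat \<Rightarrow> 'a::{real_normed_field,banach}"
  assumes "1 \<le> r" "inj_on lam {..r}" "\<And>l. l \<le> r \<Longrightarrow> norm (lam l) < 1"
  shows "((\<lambda>z. iter_conv lam s r (u - z) * shifted_kernel lam s r (z - v)) has_sum
           iter_conv lam s (Suc r) (u - v)) UNIV"
proof -
  define \<sigma> where "\<sigma> = (\<Sum>l<r. s l)"
  define M where "M = u - v - (\<Sum>l<Suc r. s l)"
  let ?c = "conv_weight lam r"
  have lam_r: "lam j \<noteq> lam r" "norm (lam j) < 1" "norm (lam r) < 1" if "j < r" for j
    using that assms(2,3) by (auto dest: inj_onD)
  have each: "((\<lambda>z. ?c j * (abs_power (lam j) (u - \<sigma> - z) * abs_power (lam r) (z - (v + s r)))) has_sum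
      ?c j * (conv_coeff (lam j) (lam r) * abs_power (lam j) M
              + conv_coeff (lam r) (lam j) * abs_power (lam r) M)) UNIV" if "j < r" for j
    using has_sum_abs_power_conv[OF lam_r[OF that], of "u - \<sigma>" "v + s r"]
    by (intro has_sum_cmult_right) (simp add: M_def \<sigma>_def algebra_simps)
  have "((\<lambda>z. \<Sum>j<r. ?c j * (abs_power (lam j) (u - \<sigma> - z) * abs_power (lam r) (z - (v + s r))))
      has_sum (\<Sum>j<r. ?c j * (conv_coeff (lam j) (lam r) * abs_power (lam j) M
              + conv_coeff (lam r) (lam j) * abs_power (lam r) M))) UNIV"
    by (rule has_sum_sum) (use each in auto)
  moreover have "(\<lambda>z. \<Sum>j<r. ?c j * (abs_power (lam j) (u - \<sigma> - z) * abs_power (lam r) (z - (v + s r))))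
      = (\<lambda>z. iter_conv lam s r (u - z) * shifted_kernel lam s r (z - v))"
    by (simp add: iter_conv_def shifted_kernel_def \<sigma>_def sum_distrib_left sum_distrib_right
        mult_ac algebra_simps)
  moreover have weight_r: "(\<Sum>j<r. ?c j * conv_coeff (lam r) (lam j)) = conv_weight lam (Suc r) r"
    unfolding conv_weight_Suc_self
  proof (rule sum_conv_weight_conv_coeff)
    show "inj_on lam {..<r}" using assms(2) by (rule inj_on_subset) auto
    show "lam r \<notin> lam ` {..<r}" using lam_r(1) by (metis imageE lessThan_iff)
    show "lam i * lam l \<noteq> 1" if "i < r" "l < r" for i l
      using that by (intro norm_lt_one_mult_neq_one assms(3)) auto
    show "lam r * lam l \<noteq> 1" if "l < r" for l
      using that by (intro norm_lt_one_mult_neq_one assms(3)) auto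
  qed (use assms(1) in auto)
  moreover have "(\<Sum>j<r. ?c j * (conv_coeff (lam j) (lam r) * abs_power (lam j) M
              + conv_coeff (lam r) (lam j) * abs_power (lam r) M)) = iter_conv lam s (Suc r) (u - v)"
  proof -
    have "(\<Sum>j<r. ?c j * (conv_coeff (lam j) (lam r) * abs_power (lam j) M
              + conv_coeff (lam r) (lam j) * abs_power (lam r) M))
        = (\<Sum>j<r. ?c j * conv_coeff (lam j) (lam r) * abs_power (lam j) M)
          + (\<Sum>j<r. ?c j * conv_coeff (lam r) (lam j)) * abs_power (lam r) M"
      by (simp add: sum.distrib sum_distrib_left sum_distrib_right algebra_simps)
    then show ?thesis
      by (simp add: weight_r iter_conv_def conv_weight_Suc M_def)
  qed
  ultimately show ?thesis by (simp only:)
qed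

lemma iter_conv_decay:
  fixes lam :: "nat \<Rightarrow> 'a::real_normed_field"
  assumes "0 < \<rho>" "\<rho> \<le> 1" "\<And>l. l < r \<Longrightarrow> norm (lam l) \<le> \<rho>"
  obtains D where "\<And>m. norm (iter_conv lam s r m) \<le> D * abs_power \<rho> m"
proof -
  define \<sigma> where "\<sigma> = (\<Sum>l<r. s l)"
  define D where "D = (\<Sum>j<r. norm (conv_weight lam r j)) / abs_power \<rho> \<sigma>"
  have "norm (iter_conv lam s r m) \<le> D * abs_power \<rho> m" for m
  proof -
    have "abs_power \<rho> m \<ge> abs_power \<rho> (m - \<sigma>) * abs_power \<rho> \<sigma>"
      unfolding abs_power_def power_add[symmetric] using assms(1,2) by (intro power_decreasing) auto
    then have shift: "abs_power \<rho> (m - \<sigma>) \<le> abs_power \<rho> m / abs_power \<rho> \<sigma>"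
      using assms(1) by (simp add: abs_power_def field_simps)
    have "norm (iter_conv lam s r m) \<le> (\<Sum>j<r. norm (conv_weight lam r j) * abs_power \<rho> (m - \<sigma>))"
      unfolding iter_conv_def \<sigma>_def[symmetric]
      by (intro order_trans[OF norm_sum] sum_mono)
        (auto simp: norm_mult intro!: mult_left_mono norm_abs_power_le assms(3))
    also have "\<dots> \<le> (\<Sum>j<r. norm (conv_weight lam r j) * (abs_power \<rho> m / abs_power \<rho> \<sigma>))"
      by (intro sum_mono mult_left_mono shift) auto
    finally show ?thesis by (simp add: D_def sum_distrib_right sum_divide_distrib)
  qed
  then show ?thesis by (rule that)
qed

section \<open>Truncated convolutions\<close>

fun toeplitz_prod :: "(nat \<Rightarrow> 'a::comm_semiring_1) \<Rightarrow> (nat \<Rightarrow> int) \<Rightarrow> nat \<Rightarrow> nat \<Rightarrow> nat \<Rightarrow> nat \<Rightarrow> 'a"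
  where
    "toeplitz_prod lam s n 0 x y = (if x = y then 1 else 0)"
  | "toeplitz_prod lam s n (Suc r) x y =
       (\<Sum>z\<in>{1..n}. toeplitz_prod lam s n r x z * shifted_kernel lam s r (int z - int y))"

lemma toeplitz_prod_one:
  assumes "x \<in> {1..n}"
  shows "toeplitz_prod lam s n 1 x y = shifted_kernel lam s 0 (int x - int y)"
proof -
  have "toeplitz_prod lam s n 1 x y
      = (\<Sum>z\<in>{1..n}. if z = x then shifted_kernel lam s 0 (int z - int y) else 0)"
    unfolding One_nat_def toeplitz_prod.simps by (intro sum.cong) auto
  then show ?thesis using assms by simp
qed

lemma iter_conv_Suc_truncation_error:
  fixes lam :: "nat \<Rightarrow> 'a::{real_normed_field,banach}"
  assumes "1 \<le> r" "inj_on lam {..r}" "0 \<le> \<rho>" "\<rho> < 1" "\<And>l. l \<le> r \<Longrightarrow> norm (lam l) \<le> \<rho>"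
    and decay: "\<And>m. norm (iter_conv lam s r m) \<le> D * abs_power \<rho> m"
    and x: "x \<in> {1..n}"
  shows "norm (iter_conv lam s (Suc r) (int x - int y)
               - (\<Sum>z\<in>{1..n}. iter_conv lam s r (int x - int z) * shifted_kernel lam s r (int z - int y)))
         \<le> D * ((\<rho> ^ x + \<rho> ^ (n + 1 - x)) / (1 - \<rho>))"
proof -
  define f where "f = (\<lambda>z. iter_conv lam s r (int x - z) * shifted_kernel lam s r (z - int y))"
  define J where "J = {1..int n}"
  have "norm (lam l) < 1" if "l \<le> r" for l
    using assms(4,5) that by (meson le_less_trans)
  then have "(f has_sum iter_conv lam s (Suc r) (int x - int y)) UNIV"
    unfolding f_def by (intro has_sum_iter_conv_Suc assms(1,2))
  then have "(f has_sum (iter_conv lam s (Suc r) (int x - int y) - sum f J)) (- J)"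
    using has_sum_Diff[OF _ has_sum_finite[of J f]] by (simp add: J_def Compl_eq_Diff_UNIV)
  moreover have "((\<lambda>z. D * abs_power \<rho> (z - int x)) has_sum
      (D * ((\<rho> ^ x + \<rho> ^ (n + 1 - x)) / (1 - \<rho>)))) (- J)"
    unfolding J_def using assms(3,4) x by (intro has_sum_cmult_right has_sum_abs_power_outside) auto
  moreover have "norm (f z) \<le> D * abs_power \<rho> (z - int x)" for z
  proof -
    have "norm (shifted_kernel lam s r (z - int y)) \<le> 1"
      unfolding shifted_kernel_def abs_power_def norm_power
      using assms(4) assms(5)[of r] by (intro power_le_one) auto
    then have "norm (f z) \<le> norm (iter_conv lam s r (int x - z))"
      unfolding f_def norm_mult by (simp add: mult_left_le)
    also have "\<dots> \<le> D * abs_power \<rho> (z - int x)"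
      using decay[of "int x - z"] abs_power_minus_commute[of \<rho> "int x" z] by simp
    finally show ?thesis .
  qed
  ultimately have "norm (iter_conv lam s (Suc r) (int x - int y) - sum f J)
      \<le> D * ((\<rho> ^ x + \<rho> ^ (n + 1 - x)) / (1 - \<rho>))"
    by (rule norm_infsum_le)
  moreover have "sum f J = (\<Sum>z\<in>{1..n}. iter_conv lam s r (int x - int z) * shifted_kernel lam s r (int z - int y))"
  proof -
    have "J = int ` {1..n}" by (simp add: J_def image_int_atLeastAtMost)
    then show ?thesis by (simp add: sum.reindex f_def)
  qed
  ultimately show ?thesis by simp
qed

lemma sum_norm_shifted_kernel_le:
  fixes lam :: "nat \<Rightarrow> 'a::real_normed_div_algebra"
  assumes "0 \<le> \<rho>" "\<rho> < 1" "norm (lam r) \<le> \<rho>"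
  shows "(\<Sum>z\<in>{1..n}. norm (shifted_kernel lam s r (int z - int y))) \<le> 2 / (1 - \<rho>)"
proof -
  have "(\<Sum>z\<in>{1..n}. norm (shifted_kernel lam s r (int z - int y)))
      \<le> (\<Sum>z\<in>{1..n}. abs_power \<rho> (int z - (int y + s r)))"
    unfolding shifted_kernel_def
    by (intro sum_mono) (simp add: norm_abs_power_le assms(3) algebra_simps)
  also have "\<dots> = (\<Sum>w\<in>int ` {1..n}. abs_power \<rho> (w - (int y + s r)))"
    by (simp add: sum.reindex)
  also have "\<dots> \<le> 2 / (1 - \<rho>)"
    by (rule sum_abs_power_le) (use assms(1,2) in auto)
  finally show ?thesis .
qed

lemma toeplitz_prod_approx_Suc:
  fixes lam :: "nat \<Rightarrow> 'a::{real_normed_field,banach}"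
  assumes "1 \<le> r" "inj_on lam {..r}" "0 < \<rho>" "\<rho> < 1" "\<And>l. l \<le> r \<Longrightarrow> norm (lam l) \<le> \<rho>"
    and "0 \<le> B"
    and approx: "\<And>n x y. x \<in> {1..n} \<Longrightarrow>
      norm (toeplitz_prod lam s n r x y - iter_conv lam s r (int x - int y))
        \<le> B * (\<rho> ^ x + \<rho> ^ (n + 1 - x))"
  obtains B' where "0 \<le> B'" "\<And>n x y. x \<in> {1..n} \<Longrightarrow>
      norm (toeplitz_prod lam s n (Suc r) x y - iter_conv lam s (Suc r) (int x - int y))
        \<le> B' * (\<rho> ^ x + \<rho> ^ (n + 1 - x))"
proof -
  obtain D where D: "\<And>m. norm (iter_conv lam s r m) \<le> D * abs_power \<rho> m"
    using iter_conv_decay[of \<rho> r lam s] assms(3-5) by auto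
  have "0 \<le> D" using D[of 0] order_trans[OF norm_ge_zero] by (simp add: abs_power_def)
  have "norm (toeplitz_prod lam s n (Suc r) x y - iter_conv lam s (Suc r) (int x - int y))
        \<le> (2 * B + D) / (1 - \<rho>) * (\<rho> ^ x + \<rho> ^ (n + 1 - x))"
    if x: "x \<in> {1..n}" for n x y
  proof -
    define e where "e = \<rho> ^ x + \<rho> ^ (n + 1 - x)"
    let ?h = "\<lambda>z. shifted_kernel lam s r (int z - int y)"
    have kernel_sum: "(\<Sum>z\<in>{1..n}. norm (?h z)) \<le> 2 / (1 - \<rho>)"
      using assms(3,4) assms(5)[of r] by (intro sum_norm_shifted_kernel_le) auto
    have approx_x: "norm (toeplitz_prod lam s n r x z - iter_conv lam s r (int x - int z)) \<le> B * e" for z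
      unfolding e_def by (rule approx[OF x])
    have "norm (\<Sum>z\<in>{1..n}. (toeplitz_prod lam s n r x z - iter_conv lam s r (int x - int z)) * ?h z)
        \<le> (\<Sum>z\<in>{1..n}. B * e * norm (?h z))"
      by (intro order_trans[OF norm_sum] sum_mono) (simp add: norm_mult mult_right_mono approx_x)
    also have "\<dots> \<le> B * e * (2 / (1 - \<rho>))"
      unfolding sum_distrib_left[symmetric]
      using kernel_sum assms(3,6) by (intro mult_left_mono) (auto simp: e_def)
    finally have main: "norm (\<Sum>z\<in>{1..n}. (toeplitz_prod lam s n r x z - iter_conv lam s r (int x - int z)) * ?h z)
        \<le> B * e * (2 / (1 - \<rho>))" .
    have tail: "norm (iter_conv lam s (Suc r) (int x - int y)
               - (\<Sum>z\<in>{1..n}. iter_conv lam s r (int x - int z) * ?h z)) \<le> D * (e / (1 - \<rho>))"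
      unfolding e_def using assms(3) by (intro iter_conv_Suc_truncation_error[OF assms(1,2) _ assms(4,5) D x]) simp
    have "toeplitz_prod lam s n (Suc r) x y - iter_conv lam s (Suc r) (int x - int y)
        = (\<Sum>z\<in>{1..n}. (toeplitz_prod lam s n r x z - iter_conv lam s r (int x - int z)) * ?h z)
          - (iter_conv lam s (Suc r) (int x - int y) - (\<Sum>z\<in>{1..n}. iter_conv lam s r (int x - int z) * ?h z))"
      by (simp add: algebra_simps sum_subtractf)
    also have "norm \<dots> \<le> B * e * (2 / (1 - \<rho>)) + D * (e / (1 - \<rho>))"
      using norm_triangle_ineq4 main tail by (rule order_trans[OF _ add_mono])
    also have "\<dots> = (2 * B + D) / (1 - \<rho>) * e"
      by (simp add: add_divide_distrib algebra_simps)
    finally show ?thesis by (simp add: e_def)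
  qed
  moreover have "0 \<le> (2 * B + D) / (1 - \<rho>)"
    using assms(4,6) \<open>0 \<le> D\<close> by simp
  ultimately show ?thesis using that by blast
qed

lemma toeplitz_prod_approx:
  fixes lam :: "nat \<Rightarrow> 'a::{real_normed_field,banach}"
  assumes "1 \<le> r" "inj_on lam {..<r}" "0 < \<rho>" "\<rho> < 1" "\<And>l. l < r \<Longrightarrow> norm (lam l) \<le> \<rho>"
  obtains B where "0 \<le> B" "\<And>n x y. x \<in> {1..n} \<Longrightarrow>
      norm (toeplitz_prod lam s n r x y - iter_conv lam s r (int x - int y))
        \<le> B * (\<rho> ^ x + \<rho> ^ (n + 1 - x))"
proof -
  have "\<exists>B\<ge>0. \<forall>n x y. x \<in> {1..n} \<longrightarrow>
      norm (toeplitz_prod lam s n r x y - iter_conv lam s r (int x - int y))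
        \<le> B * (\<rho> ^ x + \<rho> ^ (n + 1 - x))"
    using assms(1,2,5)
  proof (induction r rule: nat_induct_at_least)
    case base
    have "norm (toeplitz_prod lam s n 1 x y - iter_conv lam s 1 (int x - int y))
        \<le> 0 * (\<rho> ^ x + \<rho> ^ (n + 1 - x))" if "x \<in> {1..n}" for n x y
      by (simp only: toeplitz_prod_one[OF that] iter_conv_one) simp
    then show ?case by blast
  next
    case (Suc r)
    then obtain B where "0 \<le> B" "\<And>n x y. x \<in> {1..n} \<Longrightarrow>
        norm (toeplitz_prod lam s n r x y - iter_conv lam s r (int x - int y))
          \<le> B * (\<rho> ^ x + \<rho> ^ (n + 1 - x))"
      by (auto simp: lessThan_Suc)
    from toeplitz_prod_approx_Suc[OF Suc.hyps _ assms(3,4) _ this] Suc.prems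
    show ?case by (metis lessThan_Suc_atMost less_Suc_eq_le)
  qed
  then show ?thesis using that by blast
qed

section \<open>The cyclic sum as a trace\<close>

lemma sum_PiE_insert:
  assumes "finite A" "r \<notin> A" "\<And>i. finite (B i)"
  shows "(\<Sum>i\<in>PiE (insert r A) B. F i) = (\<Sum>z\<in>B r. \<Sum>g\<in>PiE A B. F (g(r := z)))"
proof -
  have "(\<Sum>i\<in>PiE (insert r A) B. F i) = (\<Sum>i\<in>(\<lambda>(y, g). g(r := y)) ` (B r \<times> PiE A B). F i)"
    by (simp add: PiE_insert_eq)
  also have "\<dots> = (\<Sum>(z, g)\<in>B r \<times> PiE A B. F (g(r := z)))"
    by (subst sum.reindex[OF inj_combinator[OF assms(2)]]) (simp_all add: o_def case_prod_unfold)
  also have "\<dots> = (\<Sum>z\<in>B r. \<Sum>g\<in>PiE A B. F (g(r := z)))"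
    by (simp add: sum.cartesian_product)
  finally show ?thesis .
qed

definition path_weight :: "(nat \<Rightarrow> 'a::comm_semiring_1) \<Rightarrow> (nat \<Rightarrow> int) \<Rightarrow> nat \<Rightarrow> (nat \<Rightarrow> nat) \<Rightarrow> nat \<Rightarrow> 'a"
  where "path_weight lam s r i y =
    (\<Prod>l<r. shifted_kernel lam s l (int (i l) - int (if Suc l < r then i (Suc l) else y)))"

lemma path_weight_upd:
  "path_weight lam s (Suc r) (g(r := z)) y = path_weight lam s r g z * shifted_kernel lam s r (int z - int y)"
proof -
  have "(\<Prod>l<r. shifted_kernel lam s l
          (int ((g(r := z)) l) - int (if Suc l < Suc r then (g(r := z)) (Suc l) else y)))
      = (\<Prod>l<r. shifted_kernel lam s l (int (g l) - int (if Suc l < r then g (Suc l) else z)))"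
    by (intro prod.cong refl) auto
  then show ?thesis by (simp add: path_weight_def)
qed

lemma sum_path_weight_eq_toeplitz_prod:
  assumes "1 \<le> r"
  shows "(\<Sum>i\<in>PiE {..<r} (\<lambda>_. {1..n}). if i 0 = x then path_weight lam s r i y else 0)
       = toeplitz_prod lam s n r x y"
  using assms
proof (induction r arbitrary: y rule: nat_induct_at_least)
  case base
  have "(\<Sum>i\<in>PiE {..<1} (\<lambda>_. {1..n}). if i 0 = x then path_weight lam s 1 i y else 0)
      = (\<Sum>z\<in>{1..n}. \<Sum>g\<in>PiE {} (\<lambda>_. {1..n}).
           if (g(0 := z)) 0 = x then path_weight lam s 1 (g(0 := z)) y else 0)"
    using sum_PiE_insert[of "{}" 0 "\<lambda>_. {1..n}" "\<lambda>i. if i 0 = x then path_weight lam s 1 i y else 0"]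
    by (simp add: lessThan_Suc)
  also have "\<dots> = (\<Sum>z\<in>{1..n}. (if x = z then 1 else 0) * shifted_kernel lam s 0 (int z - int y))"
    by (intro sum.cong refl) (auto simp: path_weight_def)
  finally show ?case by simp
next
  case (Suc r)
  have "(\<Sum>i\<in>PiE {..<Suc r} (\<lambda>_. {1..n}). if i 0 = x then path_weight lam s (Suc r) i y else 0)
      = (\<Sum>z\<in>{1..n}. \<Sum>g\<in>PiE {..<r} (\<lambda>_. {1..n}).
           if (g(r := z)) 0 = x then path_weight lam s (Suc r) (g(r := z)) y else 0)"
    using sum_PiE_insert[of "{..<r}" r "\<lambda>_. {1..n}"
        "\<lambda>i. if i 0 = x then path_weight lam s (Suc r) i y else 0"]
    by (simp add: lessThan_Suc)
  also have "\<dots> = (\<Sum>z\<in>{1..n}. (\<Sum>g\<in>PiE {..<r} (\<lambda>_. {1..n}).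
        if g 0 = x then path_weight lam s r g z else 0) * shifted_kernel lam s r (int z - int y))"
    unfolding sum_distrib_right using Suc.hyps
    by (intro sum.cong refl) (simp add: path_weight_upd)
  also have "\<dots> = toeplitz_prod lam s n (Suc r) x y"
    using Suc.IH by simp
  finally show ?case .
qed

lemma cyclic_sum_eq_trace:
  assumes "1 \<le> k"
  shows "(\<Sum>i \<in> PiE {0..<k} (\<lambda>_. {1..n}).
            \<Prod>l<k. lam l ^ nat \<bar>int (i l) - int (i ((l + 1) mod k)) - s l\<bar>)
       = (\<Sum>x\<in>{1..n}. toeplitz_prod lam s n k x x)"
proof -
  let ?P = "PiE {..<k} (\<lambda>_. {1..n})"
  have "(\<Prod>l<k. lam l ^ nat \<bar>int (i l) - int (i ((l + 1) mod k)) - s l\<bar>) = path_weight lam s k i (i 0)"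
    for i
    unfolding path_weight_def shifted_kernel_def abs_power_def
  proof (intro prod.cong refl)
    fix l assume "l \<in> {..<k}"
    have "(l + 1) mod k = (if Suc l < k then Suc l else 0)"
    proof (cases "Suc l < k")
      case False
      with \<open>l \<in> {..<k}\<close> have "Suc l = k" by simp
      then show ?thesis by simp
    qed simp
    then show "lam l ^ nat \<bar>int (i l) - int (i ((l + 1) mod k)) - s l\<bar>
        = lam l ^ nat \<bar>int (i l) - int (if Suc l < k then i (Suc l) else i 0) - s l\<bar>"
      by simp
  qed
  then have "(\<Sum>i \<in> PiE {0..<k} (\<lambda>_. {1..n}).
            \<Prod>l<k. lam l ^ nat \<bar>int (i l) - int (i ((l + 1) mod k)) - s l\<bar>)
      = (\<Sum>i\<in>?P. path_weight lam s k i (i 0))"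
    by (simp add: atLeast0LessThan)
  also have "\<dots> = (\<Sum>i\<in>?P. \<Sum>x\<in>{1..n}. if i 0 = x then path_weight lam s k i x else 0)"
  proof (intro sum.cong refl)
    fix i assume "i \<in> ?P"
    then have "i 0 \<in> {1..n}" using assms by (auto simp: PiE_def Pi_def)
    then show "path_weight lam s k i (i 0) = (\<Sum>x\<in>{1..n}. if i 0 = x then path_weight lam s k i x else 0)"
      by (simp add: sum.delta)
  qed
  also have "\<dots> = (\<Sum>x\<in>{1..n}. \<Sum>i\<in>?P. if i 0 = x then path_weight lam s k i x else 0)"
    by (rule sum.swap)
  also have "\<dots> = (\<Sum>x\<in>{1..n}. toeplitz_prod lam s n k x x)"
    by (simp only: sum_path_weight_eq_toeplitz_prod[OF assms])
  finally show ?thesis .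
qed

lemma trace_toeplitz_prod_tendsto:
  fixes lam :: "nat \<Rightarrow> 'a::{real_normed_field,banach}"
  assumes "1 \<le> k" "inj_on lam {..<k}" "\<And>l. l < k \<Longrightarrow> norm (lam l) < 1"
  shows "(\<lambda>n. (1 / of_nat n) * (\<Sum>x\<in>{1..n}. toeplitz_prod lam s n k x x)) \<longlonglongrightarrow> iter_conv lam s k 0"
proof -
  define \<rho> where "\<rho> = Max (insert (1/2) ((\<lambda>l. norm (lam l)) ` {..<k}))"
  have \<rho>: "0 < \<rho>" "\<rho> < 1" "\<And>l. l < k \<Longrightarrow> norm (lam l) \<le> \<rho>"
    using assms(3) by (auto simp: \<rho>_def Max_gr_iff Max_less_iff Max_ge_iff)
  obtain B where "0 \<le> B" and B: "\<And>n x. x \<in> {1..n} \<Longrightarrow>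
      norm (toeplitz_prod lam s n k x x - iter_conv lam s k 0) \<le> B * (\<rho> ^ x + \<rho> ^ (n + 1 - x))"
    using toeplitz_prod_approx[OF assms(1,2) \<rho>, of s] by (metis diff_self)
  have bound: "norm ((1 / of_nat n) * (\<Sum>x\<in>{1..n}. toeplitz_prod lam s n k x x) - iter_conv lam s k 0)
      \<le> B * (1 / (1 - \<rho>) + 1 / (1 - \<rho>)) / real n" if "1 \<le> n" for n
  proof -
    have "norm ((1 / of_nat n) * (\<Sum>x\<in>{1..n}. toeplitz_prod lam s n k x x) - iter_conv lam s k 0)
        = norm (\<Sum>x\<in>{1..n}. toeplitz_prod lam s n k x x - iter_conv lam s k 0) / real n"
      using that by (simp add: sum_subtractf field_simps norm_divide)
    also have "\<dots> \<le> (\<Sum>x\<in>{1..n}. B * (\<rho> ^ x + \<rho> ^ (n + 1 - x))) / real n"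
      by (intro divide_right_mono order_trans[OF norm_sum sum_mono] B) auto
    also have "\<dots> = B * ((\<Sum>x\<in>{1..n}. \<rho> ^ x) + (\<Sum>x\<in>{1..n}. \<rho> ^ (n + 1 - x))) / real n"
      by (simp only: sum_distrib_left[symmetric] sum.distrib)
    also have "\<dots> \<le> B * (1 / (1 - \<rho>) + 1 / (1 - \<rho>)) / real n"
      using \<rho>(1,2) \<open>0 \<le> B\<close>
      by (intro divide_right_mono mult_left_mono add_mono sum_power_inj_le) (auto simp: inj_on_def)
    finally show ?thesis .
  qed
  have "((\<lambda>n. (1 / of_nat n) * (\<Sum>x\<in>{1..n}. toeplitz_prod lam s n k x x) - iter_conv lam s k 0)
      \<longlongrightarrow> 0) sequentially"
  proof (rule Lim_null_comparison)
    show "\<forall>\<^sub>F n in sequentially.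
        norm ((1 / of_nat n) * (\<Sum>x\<in>{1..n}. toeplitz_prod lam s n k x x) - iter_conv lam s k 0)
          \<le> B * (1 / (1 - \<rho>) + 1 / (1 - \<rho>)) / real n"
      using eventually_ge_at_top[of "1::nat"] by (rule eventually_mono) (rule bound)
  qed (rule lim_const_over_n)
  then show ?thesis by (simp add: Lim_null[symmetric])
qed

lemma iter_conv_zero:
  assumes "1 \<le> k"
  shows "iter_conv lam s k 0 = (\<Sum>j<k. lam j ^ (nat \<bar>\<Sum>l<k. s l\<bar> + k - 1) *
           (\<Prod>l\<in>{..<k} - {j}. (1 - lam l ^ 2) / ((lam j - lam l) * (1 - lam j * lam l))))"
  unfolding iter_conv_def
proof (intro sum.cong refl)
  fix j assume "j \<in> {..<k}"
  then have card: "card ({..<k} - {j}) = k - 1" by simp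
  have coeff: "conv_coeff (lam j) (lam l) = lam j * ((1 - lam l ^ 2) / ((lam j - lam l) * (1 - lam j * lam l)))"
    for l by (simp add: conv_coeff_def)
  have "conv_weight lam k j
      = lam j ^ (k - 1) * (\<Prod>l\<in>{..<k} - {j}. (1 - lam l ^ 2) / ((lam j - lam l) * (1 - lam j * lam l)))"
    unfolding conv_weight_def coeff prod.distrib by (simp add: card)
  moreover have "k - 1 + nat \<bar>\<Sum>l<k. s l\<bar> = nat \<bar>\<Sum>l<k. s l\<bar> + k - 1" using assms by simp
  ultimately show "conv_weight lam k j * abs_power (lam j) (0 - (\<Sum>l<k. s l))
      = lam j ^ (nat \<bar>\<Sum>l<k. s l\<bar> + k - 1) *
        (\<Prod>l\<in>{..<k} - {j}. (1 - lam l ^ 2) / ((lam j - lam l) * (1 - lam j * lam l)))"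
    by (simp add: abs_power_def mult_ac flip: power_add)
qed

theorem mainTheorem1:
  fixes k :: nat and lam :: "nat \<Rightarrow> complex" and s :: "nat \<Rightarrow> int"
  assumes "k \<ge> 1"
    and "inj_on lam {0..<k}"
    and "\<And>l. l < k \<Longrightarrow> norm (lam l) < 1"
  defines "S \<equiv> nat \<bar>\<Sum>l<k. s l\<bar>"
  shows "(\<lambda>n. (1 / of_nat n) *
            (\<Sum>i \<in> PiE {0..<k} (\<lambda>_. {1..n::nat}).
               \<Prod>l<k. lam l ^ nat \<bar>int (i l) - int (i ((l + 1) mod k)) - s l\<bar>))
         \<longlonglongrightarrow>
         (\<Sum>j<k. lam j ^ (S + k - 1) *
            (\<Prod>l \<in> {..<k} - {j}. (1 - lam l ^ 2) / ((lam j - lam l) * (1 - lam j * lam l))))"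
proof -
  have "(\<lambda>n. (1 / of_nat n) * (\<Sum>x\<in>{1..n}. toeplitz_prod lam s n k x x)) \<longlonglongrightarrow> iter_conv lam s k 0"
    using assms(1-3) by (intro trace_toeplitz_prod_tendsto) (auto simp: atLeast0LessThan)
  then show ?thesis
    unfolding cyclic_sum_eq_trace[OF assms(1)] iter_conv_zero[OF assms(1)] S_def .
qed

end
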